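(* For all $G,H\subseteq A$ and every $\varphi\in\mathcal{L}_{CoRGAL}$, the formula $\langle[G]\rangle\langle[H]\rangle\varphi\rightarrow[\langle A\setminus(G\cup H)\rangle]\varphi$ is valid.
   Context: Fix a finite set $A$ of agents and a countable set $P$ of propositional variables. The language $\mathcal{L}_{CoRGAL}$ is given by $\varphi ::= p \mid \neg\varphi \mid (\varphi\wedge\varphi) \mid K_a\varphi \mid [\varphi]\varphi \mid [G,\varphi]\varphi \mid [\langle G\rangle]\varphi$ with $p\in P$, $a\in A$, $G\subseteq A$. $\mathcal{L}_{EL}$ is the fragment built only from $p,\neg,\wedge,K_a$. Duals: $\langle\psi\rangle\varphi:=\neg[\psi]\neg\varphi$, $\langle[G]\rangle\varphi:=\neg[\langle G\rangle]\neg\varphi$. For $G\subseteq A$, $\mathcal{L}^G_{EL}$ is the set of formulas $\bigwedge_{i\in G}K_i\varphi_i$ with each $\varphi_i\in\mathcal{L}_{EL}$; $\psi_G,\chi_G$ range over $\mathcal{L}^G_{EL}$. Epistemic models $M=(W,\sim,V)$: $W\neq\emptyset$, each $\sim_a$ an equivalence relation, $V:P\to\mathcal{P}(W)$; $M^\varphi$ is the restriction of $M$ to $\{v:(M,v)\models\varphi\}$. Semantics: standard for $p,\neg,\wedge,K_a$; $(M,w)\models[\varphi]\psi$ iff $(M,w)\models\varphi$ implies $(M^\varphi,w)\models\psi$; $(M,w)\models[G,\chi]\varphi$ iff $(M,w)\models\chi$ and for all $\psi_G$, $(M,w)\models[\psi_G\wedge\chi]\varphi$; $(M,w)\models[\langle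 G\rangle]\varphi$ iff for every $\psi_G$ there is $\chi_{A\setminus G}$ with $(M,w)\models\psi_G\to\langle\psi_G\wedge\chi_{A\setminus G}\rangle\varphi$. Thus $(M,w)\models\langle[G]\rangle\varphi$ iff there is $\psi_G$ such that for all $\chi_{A\setminus G}$, $(M,w)\models\psi_G\wedge[\psi_G\wedge\chi_{A\setminus G}]\varphi$. A formula is valid if true at every pointed model. *)

theory Defs
  imports Main "HOL-Library.Countable"
begin

text \<open>Syntax of CoRGAL. Agents: a finite type 'a (A = UNIV); propositional
variables: a countable type 'p.\<close>

datatype ('a, 'p) form =
    Atom 'p
  | Neg "('a, 'p) form"
  | Conj "('a, 'p) form" "('a, 'p) form"
  | K 'a "('a, 'p) form"
  | Ann "('a, 'p) form" "('a, 'p) form"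
  | GAnn "'a set" "('a, 'p) form" "('a, 'p) form"
  | Coal "'a set" "('a, 'p) form"

primrec is_EL :: "('a, 'p) form \<Rightarrow> bool" where
  "is_EL (Atom p) = True"
| "is_EL (Neg f) = is_EL f"
| "is_EL (Conj f g) = (is_EL f \<and> is_EL g)"
| "is_EL (K a f) = is_EL f"
| "is_EL (Ann f g) = False"
| "is_EL (GAnn G f g) = False"
| "is_EL (Coal G f) = False"

record ('w, 'a, 'p) emodel =
  W :: "'w set"
  Rel :: "'a \<Rightarrow> ('w \<times> 'w) set"
  Val :: "'p \<Rightarrow> 'w set"

definition is_model :: "('w, 'a, 'p) emodel \<Rightarrow> bool" where
  "is_model M \<longleftrightarrow> W M \<noteq> {} \<and> (\<forall>a. equiv (W M) (Rel M a)) \<and> (\<forall>p. Val M p \<subseteq> W M)"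

definition restrict_model :: "('w, 'a, 'p) emodel \<Rightarrow> 'w set \<Rightarrow> ('w, 'a, 'p) emodel" where
  "restrict_model M S =
     \<lparr> W = W M \<inter> S,
       Rel = (\<lambda>a. Rel M a \<inter> ((W M \<inter> S) \<times> (W M \<inter> S))),
       Val = (\<lambda>p. Val M p \<inter> (W M \<inter> S)) \<rparr>"

primrec sat_el :: "('a, 'p) form \<Rightarrow> ('w, 'a, 'p) emodel \<Rightarrow> 'w \<Rightarrow> bool" where
  "sat_el (Atom p) M w = (w \<in> Val M p)"
| "sat_el (Neg f) M w = (\<not> sat_el f M w)"
| "sat_el (Conj f g) M w = (sat_el f M w \<and> sat_el g M w)"
| "sat_el (K a f) M w = (\<forall>v\<in>W M. (w, v) \<in> Rel M a \<longrightarrow> sat_el f M v)"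
| "sat_el (Ann f g) M w = False"
| "sat_el (GAnn G f g) M w = False"
| "sat_el (Coal G f) M w = False"

text \<open>A formula psi_G in L^G_EL, i.e. the conjunction over i in G of K_i (f i) with each
f i epistemic, is represented by the function f; its truth value at (M,w) is
the (finite) conjunction below (the empty conjunction for G = {} is true).\<close>
definition EL_fam :: "'a set \<Rightarrow> ('a \<Rightarrow> ('a, 'p) form) \<Rightarrow> bool" where
  "EL_fam G f \<longleftrightarrow> (\<forall>i\<in>G. is_EL (f i))"

definition sat_G :: "'a set \<Rightarrow> ('a \<Rightarrow> ('a, 'p) form) \<Rightarrow> ('w, 'a, 'p) emodel \<Rightarrow> 'w \<Rightarrow> bool" where
  "sat_G G f M w \<longleftrightarrow> (\<forall>i\<in>G. sat_el (K i (f i)) M w)"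

primrec sat :: "('a::finite, 'p) form \<Rightarrow> ('w, 'a, 'p) emodel \<Rightarrow> 'w \<Rightarrow> bool" where
  "sat (Atom p) M w = (w \<in> Val M p)"
| "sat (Neg f) M w = (\<not> sat f M w)"
| "sat (Conj f g) M w = (sat f M w \<and> sat g M w)"
| "sat (K a f) M w = (\<forall>v\<in>W M. (w, v) \<in> Rel M a \<longrightarrow> sat f M v)"
| "sat (Ann f g) M w =
     (sat f M w \<longrightarrow> sat g (restrict_model M {v \<in> W M. sat f M v}) w)"
| "sat (GAnn G chi f) M w =
     (sat chi M w \<and>
      (\<forall>psi. EL_fam G psi \<longrightarrow>
         ((sat_G G psi M w \<and> sat chi M w) \<longrightarrow>
          sat f (restrict_model M {v \<in> W M. sat_G G psi M v \<and> sat chi M v}) w)))"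
| "sat (Coal G f) M w =
     (\<forall>psi. EL_fam G psi \<longrightarrow>
        (\<exists>chi. EL_fam (- G) chi \<and>
           (sat_G G psi M w \<longrightarrow>
              (sat_G G psi M w \<and> sat_G (- G) chi M w \<and>
               sat f (restrict_model M {v \<in> W M. sat_G G psi M v \<and> sat_G (- G) chi M v}) w))))"

definition Imp :: "('a, 'p) form \<Rightarrow> ('a, 'p) form \<Rightarrow> ('a, 'p) form" where
  "Imp f g = Neg (Conj f (Neg g))"

definition CoalDia :: "'a set \<Rightarrow> ('a, 'p) form \<Rightarrow> ('a, 'p) form" where
  "CoalDia G f = Neg (Coal G (Neg f))"

definition valid :: "('a::finite, 'p) form \<Rightarrow> 'w itself \<Rightarrow> bool" where
  "valid f (_ :: 'w itself) \<longleftrightarrow>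
     (\<forall>(M :: ('w, 'a, 'p) emodel) w. is_model M \<and> w \<in> W M \<longrightarrow> sat f M w)"

end

theory Submission
  imports Defs
begin

text \<open>Suppose the coalition \<open>C = A \<setminus> (G \<union> H)\<close> announces \<open>\<psi>\<^sub>C\<close>. The witness \<open>\<psi>\<^sub>G\<close> of
  \<open>\<langle>[G]\<rangle>\<close> is played against the counter-announcement \<open>\<psi>\<^sub>C\<close> (padded by tautologies);
  in the resulting submodel \<open>\<langle>[H]\<rangle>\<phi>\<close> yields \<open>\<psi>\<^sub>H\<close> with \<open>[\<psi>\<^sub>H]\<phi>\<close>. Since the agents
  are finitely many, the first announcement is definable by an epistemic formula \<open>s\<close>,
  so each \<open>K\<^sub>i \<psi>\<^sub>H\<^sub>i\<close> in the submodel can be relativised to \<open>K\<^sub>i (s \<rightarrow> \<psi>\<^sub>H\<^sub>i\<^sup>s)\<close> in the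
  original model. Hence the two successive announcements are a single one, in which
  \<open>G \<union> H\<close> answers \<open>\<psi>\<^sub>C\<close> with \<open>K\<^sub>i \<psi>\<^sub>G\<^sub>i \<and> K\<^sub>i (s \<rightarrow> \<psi>\<^sub>H\<^sub>i\<^sup>s)\<close> and makes \<open>\<phi>\<close> true.\<close>

definition Top :: "('a, 'p) form" where
  "Top = Imp (Atom undefined) (Atom undefined)"

lemma sat_el_Top [simp]: "sat_el Top M v"
  and is_EL_Top [simp]: "is_EL Top"
  by (simp_all add: Top_def Imp_def)

primrec Conjs :: "('a, 'p) form list \<Rightarrow> ('a, 'p) form" where
  "Conjs [] = Top"
| "Conjs (f # fs) = Conj f (Conjs fs)"

lemma sat_el_Conjs: "sat_el (Conjs fs) M v \<longleftrightarrow> (\<forall>f\<in>set fs. sat_el f M v)"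
  by (induction fs) auto

lemma is_EL_Conjs: "(\<And>f. f \<in> set fs \<Longrightarrow> is_EL f) \<Longrightarrow> is_EL (Conjs fs)"
  by (induction fs) auto

lemma sat_G_definable:
  assumes "finite G" "EL_fam G f"
  obtains s where "is_EL s" "\<And>M v. sat_el s M v \<longleftrightarrow> sat_G G f M v"
proof -
  obtain xs where xs: "set xs = G"
    using finite_list[OF \<open>finite G\<close>] by blast
  let ?s = "Conjs (map (\<lambda>i. K i (f i)) xs)"
  show thesis
  proof
    show "is_EL ?s"
      using assms(2) xs by (auto intro!: is_EL_Conjs simp: EL_fam_def)
    show "sat_el ?s M v \<longleftrightarrow> sat_G G f M v" for M v
      unfolding sat_el_Conjs sat_G_def using xs by (auto simp del: sat_el.simps)
  qed
qed

definition fam_extend :: "'a set \<Rightarrow> ('a \<Rightarrow> ('a, 'p) form) \<Rightarrow> 'a \<Rightarrow> ('a, 'p) form" where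
  "fam_extend D f i = (if i \<in> D then f i else Top)"

lemma EL_fam_fam_extend: "EL_fam D f \<Longrightarrow> EL_fam X (fam_extend D f)"
  by (simp add: EL_fam_def fam_extend_def)

lemma sat_G_fam_extend: "sat_G X (fam_extend D f) M v \<longleftrightarrow> sat_G (X \<inter> D) f M v"
  by (auto simp: sat_G_def fam_extend_def)

lemma sat_G_Top [simp]: "sat_G X (\<lambda>_. Top) M v"
  by (simp add: sat_G_def)

lemma sat_G_Conj:
  "sat_G X (\<lambda>i. Conj (f i) (g i)) M v \<longleftrightarrow> sat_G X f M v \<and> sat_G X g M v"
  by (auto simp: sat_G_def)

primrec relativize :: "('a, 'p) form \<Rightarrow> ('a, 'p) form \<Rightarrow> ('a, 'p) form" where
  "relativize s (Atom p) = Atom p"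
| "relativize s (Neg f) = Neg (relativize s f)"
| "relativize s (Conj f g) = Conj (relativize s f) (relativize s g)"
| "relativize s (K a f) = K a (Imp s (relativize s f))"
| "relativize s (Ann f g) = Ann f g"
| "relativize s (GAnn G f g) = GAnn G f g"
| "relativize s (Coal G f) = Coal G f"

lemma is_EL_relativize: "is_EL s \<Longrightarrow> is_EL f \<Longrightarrow> is_EL (relativize s f)"
  by (induction f) (auto simp: Imp_def)

lemma sat_el_restrict_model_relativize:
  assumes "is_EL f" and s: "\<And>u. u \<in> W M \<Longrightarrow> sat_el s M u \<longleftrightarrow> u \<in> S"
    and "v \<in> W M" "v \<in> S"
  shows "sat_el f (restrict_model M S) v \<longleftrightarrow> sat_el (relativize s f) M v"
  using assms(1,3,4)
proof (induction f arbitrary: v)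
  case (K a f)
  then show ?case using s by (auto simp: restrict_model_def Imp_def)
qed (auto simp: restrict_model_def)

lemma sat_G_restrict_model:
  assumes "EL_fam H f" and "\<And>u. u \<in> W M \<Longrightarrow> sat_el s M u \<longleftrightarrow> u \<in> S"
    and "v \<in> W M" "v \<in> S"
  shows "sat_G H f (restrict_model M S) v \<longleftrightarrow>
    sat_G H (\<lambda>i. Imp s (relativize s (f i))) M v"
proof -
  have "sat_el (K i (f i)) (restrict_model M S) v \<longleftrightarrow>
      sat_el (K i (Imp s (relativize s (f i)))) M v" if "i \<in> H" for i
    using sat_el_restrict_model_relativize[of "K i (f i)" M s S v] assms that
    by (simp add: EL_fam_def del: sat_el.simps)
  then show ?thesis
    by (simp add: sat_G_def del: sat_el.simps)
qed

lemma restrict_model_restrict_model: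
  "restrict_model (restrict_model M S) T = restrict_model M (S \<inter> T)"
  by (auto simp: restrict_model_def)

lemma restrict_model_cong:
  "W M \<inter> S = W M \<inter> T \<Longrightarrow> restrict_model M S = restrict_model M T"
  by (simp add: restrict_model_def)

lemma restrict_model_announce_twice:
  assumes "EL_fam H f" and "\<And>u. u \<in> W M \<Longrightarrow> sat_el s M u \<longleftrightarrow> u \<in> S"
  shows "restrict_model (restrict_model M S)
      {v \<in> W (restrict_model M S). sat_G H f (restrict_model M S) v} =
    restrict_model M {v \<in> W M. v \<in> S \<and> sat_G H (\<lambda>i. Imp s (relativize s (f i))) M v}"
proof -
  have "W (restrict_model M S) = W M \<inter> S"
    by (simp add: restrict_model_def)
  then show ?thesis
    unfolding restrict_model_restrict_model
    by (intro restrict_model_cong) (auto simp: sat_G_restrict_model[OF assms])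
qed

lemma sat_Coal_iff:
  "sat (Coal G f) M w \<longleftrightarrow>
    (\<forall>psi. EL_fam G psi \<longrightarrow> sat_G G psi M w \<longrightarrow>
      (\<exists>chi. EL_fam (- G) chi \<and> sat_G (- G) chi M w \<and>
        sat f (restrict_model M {v \<in> W M. sat_G G psi M v \<and> sat_G (- G) chi M v}) w))"
proof -
  have "EL_fam (- G) (\<lambda>_. Top)"
    by (simp add: EL_fam_def)
  then show ?thesis
    by (auto 0 3)
qed

lemma sat_CoalDia:
  "sat (CoalDia G f) M w \<longleftrightarrow>
    (\<exists>psi. EL_fam G psi \<and> sat_G G psi M w \<and>
      (\<forall>chi. EL_fam (- G) chi \<longrightarrow> sat_G (- G) chi M w \<longrightarrow>
        sat f (restrict_model M {v \<in> W M. sat_G G psi M v \<and> sat_G (- G) chi M v}) w))"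
proof -
  have "EL_fam (- G) (\<lambda>_. Top)"
    by (simp add: EL_fam_def)
  then show ?thesis
    by (auto simp: CoalDia_def)
qed

text \<open>A coalition guaranteeing \<open>f\<close> can in particular do so against any announcement by
  agents outside it, the remaining agents answering with tautologies.\<close>

lemma sat_CoalDia_against:
  assumes "sat (CoalDia G f) M w" and "C \<subseteq> - G" "EL_fam C psiC" "sat_G C psiC M w"
  obtains psiG where "EL_fam G psiG" "sat_G G psiG M w"
    "sat f (restrict_model M {v \<in> W M. sat_G G psiG M v \<and> sat_G C psiC M v}) w"
proof -
  obtain psiG where "EL_fam G psiG" "sat_G G psiG M w"
    and answer: "\<And>chi. EL_fam (- G) chi \<Longrightarrow> sat_G (- G) chi M w \<Longrightarrow>
      sat f (restrict_model M {v \<in> W M. sat_G G psiG M v \<and> sat_G (- G) chi M v}) w"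
    using assms(1) unfolding sat_CoalDia by blast
  moreover have "- G \<inter> C = C"
    using assms(2) by blast
  then have "sat_G (- G) (fam_extend C psiC) M v \<longleftrightarrow> sat_G C psiC M v" for v
    by (simp only: sat_G_fam_extend)
  ultimately show thesis
    using that answer[of "fam_extend C psiC"] assms(3,4) by (simp add: EL_fam_fam_extend)
qed

lemma sat_CoalDia_announce:
  assumes "sat (CoalDia G f) M w"
  obtains psi where "EL_fam G psi" "sat_G G psi M w"
    "sat f (restrict_model M {v \<in> W M. sat_G G psi M v}) w"
proof (rule sat_CoalDia_against[OF assms, of "{}" "\<lambda>_. Top"])
  show "EL_fam {} (\<lambda>_. Top)"
    by (simp add: EL_fam_def)
qed (simp_all add: that)

lemma group_announcements_compose:
  fixes M :: "('w, 'a::finite, 'p) emodel"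
  assumes "EL_fam G psiG" "EL_fam C psiC" "EL_fam H psiH"
  defines "S \<equiv> {v \<in> W M. sat_G G psiG M v \<and> sat_G C psiC M v}"
  obtains chi where "EL_fam (G \<union> H) chi"
    and "\<And>v. v \<in> S \<Longrightarrow> sat_G (G \<union> H) chi M v \<longleftrightarrow> sat_G H psiH (restrict_model M S) v"
    and "restrict_model (restrict_model M S)
        {v \<in> W (restrict_model M S). sat_G H psiH (restrict_model M S) v} =
      restrict_model M {v \<in> W M. sat_G C psiC M v \<and> sat_G (G \<union> H) chi M v}"
proof -
  obtain sG where sG: "is_EL sG" "\<And>v. sat_el sG M v \<longleftrightarrow> sat_G G psiG M v"
    using sat_G_definable[OF finite assms(1)] by metis
  obtain sC where sC: "is_EL sC" "\<And>v. sat_el sC M v \<longleftrightarrow> sat_G C psiC M v"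
    using sat_G_definable[OF finite assms(2)] by metis
  let ?s = "Conj sG sC"
  have s_S: "u \<in> W M \<Longrightarrow> sat_el ?s M u \<longleftrightarrow> u \<in> S" for u
    by (simp add: sG(2) sC(2) S_def)
  define psiH' where "psiH' = (\<lambda>i. Imp ?s (relativize ?s (psiH i)))"
  define chi where "chi = (\<lambda>i. Conj (fam_extend G psiG i) (fam_extend H psiH' i))"
  have psiH': "EL_fam H psiH'"
    using assms(3) sG(1) sC(1) by (simp add: EL_fam_def psiH'_def Imp_def is_EL_relativize)
  have chi_EL: "EL_fam (G \<union> H) chi"
    using assms(1) psiH' by (simp add: EL_fam_def fam_extend_def chi_def)
  have chi_iff: "sat_G (G \<union> H) chi M v \<longleftrightarrow> sat_G G psiG M v \<and> sat_G H psiH' M v" for v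
    by (simp add: chi_def sat_G_Conj sat_G_fam_extend)
  have chi_S: "sat_G (G \<union> H) chi M v \<longleftrightarrow> sat_G H psiH (restrict_model M S) v" if "v \<in> S" for v
    using that sat_G_restrict_model[OF assms(3) s_S, of v]
    by (simp add: chi_iff psiH'_def S_def)
  have "restrict_model (restrict_model M S)
        {v \<in> W (restrict_model M S). sat_G H psiH (restrict_model M S) v} =
      restrict_model M {v \<in> W M. v \<in> S \<and> sat_G H psiH' M v}"
    using restrict_model_announce_twice[OF assms(3) s_S] by (simp add: psiH'_def)
  also have "\<dots> = restrict_model M {v \<in> W M. sat_G C psiC M v \<and> sat_G (G \<union> H) chi M v}"
    by (rule arg_cong[where f = "restrict_model M"]) (auto simp: chi_iff S_def)
  finally show thesis
    using that chi_EL chi_S by blast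
qed

lemma sat_Coal_of_CoalDia_CoalDia:
  fixes M :: "('w, 'a::finite, 'p) emodel"
  assumes dia: "sat (CoalDia G (CoalDia H phi)) M w" and w: "w \<in> W M"
  shows "sat (Coal (- (G \<union> H)) phi) M w"
  unfolding sat_Coal_iff
proof (intro allI impI)
  let ?C = "- (G \<union> H)"
  fix psiC assume psiC: "EL_fam ?C psiC" "sat_G ?C psiC M w"
  define S where "S psiG = {v \<in> W M. sat_G G psiG M v \<and> sat_G ?C psiC M v}" for psiG
  obtain psiG where psiG: "EL_fam G psiG" "sat_G G psiG M w"
    and dia_H: "sat (CoalDia H phi) (restrict_model M (S psiG)) w"
    unfolding S_def by (rule sat_CoalDia_against[OF dia _ psiC]) blast+
  from dia_H obtain psiH where psiH: "EL_fam H psiH" "sat_G H psiH (restrict_model M (S psiG)) w"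
    and "sat phi (restrict_model (restrict_model M (S psiG))
      {v \<in> W (restrict_model M (S psiG)). sat_G H psiH (restrict_model M (S psiG)) v}) w"
    by (rule sat_CoalDia_announce)
  moreover obtain chi where "EL_fam (G \<union> H) chi"
    "\<And>v. v \<in> S psiG \<Longrightarrow> sat_G (G \<union> H) chi M v \<longleftrightarrow> sat_G H psiH (restrict_model M (S psiG)) v"
    "restrict_model (restrict_model M (S psiG))
        {v \<in> W (restrict_model M (S psiG)). sat_G H psiH (restrict_model M (S psiG)) v} =
      restrict_model M {v \<in> W M. sat_G ?C psiC M v \<and> sat_G (G \<union> H) chi M v}"
    using group_announcements_compose[OF psiG(1) psiC(1) psiH(1)] unfolding S_def by blast
  moreover have "w \<in> S psiG"
    using w psiG(2) psiC(2) by (simp add: S_def)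
  ultimately show "\<exists>chi. EL_fam (- ?C) chi \<and> sat_G (- ?C) chi M w \<and>
      sat phi (restrict_model M {v \<in> W M. sat_G ?C psiC M v \<and> sat_G (- ?C) chi M v}) w"
    using psiH(2) by (intro exI[of _ chi]) simp
qed

theorem mainTheorem6:
  fixes G H :: "'a::finite set" and phi :: "('a, 'p::countable) form"
  shows "valid (Imp (CoalDia G (CoalDia H phi)) (Coal (- (G \<union> H)) phi)) TYPE('w)"
  unfolding valid_def Imp_def sat.simps(2,3)
  by (metis sat_Coal_of_CoalDia_CoalDia)

end
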